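(* Let $m\in(0,2]$, $\lambda\ge0$ and $q\ge1$. Let $f(x)=\sum_{k=0}^{\infty}x^ka_k$, $a_k\in\mathbb{O}$, be a slice regular function on $\mathbb{B}$ with $|f(x)|\le1$ for all $x\in\mathbb{B}$. Then $$\mathcal{B}_f(x):=|a_0|^m+\sum_{k=1}^{\infty}|x^ka_k|+\lambda|f(x)-a_0|^q\le 1\quad\text{for all } x\in\mathbb{B}\text{ with } |x|\le R_{m,\lambda,q},$$ where $R_{m,\lambda,q}$ is the unique root in $(0,1)$ of the equation $$-\frac{m}{2}+\frac{r}{1-r}+\lambda\left(\frac{r}{1-r}\right)^q=0.$$ In particular, $$\sum_{k=0}^{\infty}|x^ka_k|+|f(x)-a_0|^2\le1\quad\text{for } |x|\le 2-\sqrt{3}.$$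
   Context: $\mathbb{O}$ denotes the real algebra of octonions (the 8-dimensional non-commutative, non-associative but alternative normed division algebra over $\mathbb{R}$), with modulus $|x|=\sqrt{x\overline{x}}$ equal to the Euclidean norm on $\mathbb{R}^8$; the modulus is multiplicative, $|xy|=|x||y|$. $\mathbb{B}=\{x\in\mathbb{O}:|x|<1\}$ is the open unit ball. A slice regular function on $\mathbb{B}$ is (equivalently) a function of the form $f(x)=\sum_{k=0}^{\infty}x^ka_k$ with coefficients $a_k\in\mathbb{O}$ placed on the right, the series converging for every $x\in\mathbb{B}$ (the powers $x^k$ are unambiguous since $\mathbb{O}$ is alternative). *)

theory Defs
  imports "HOL-Analysis.Analysis"
begin

text \<open>Quaternions as pairs of complex numbers and octonions as pairs of quaternions,
  via the Cayley-Dickson construction  (a,b)(c,d) = (ac - d^* b, d a + b c^*).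
  Addition, the real vector space structure, the topology and the norm are those
  of the product type; the norm is the Euclidean norm on R^8.\<close>

type_synonym quat = "complex \<times> complex"
type_synonym oct = "quat \<times> quat"

definition qconj :: "quat \<Rightarrow> quat" where
  "qconj p = (cnj (fst p), - snd p)"

definition qmul :: "quat \<Rightarrow> quat \<Rightarrow> quat" where
  "qmul p r = (fst p * fst r - cnj (snd r) * snd p, snd r * fst p + snd p * cnj (fst r))"

definition omul :: "oct \<Rightarrow> oct \<Rightarrow> oct" where
  "omul x y = (qmul (fst x) (fst y) - qmul (qconj (snd y)) (snd x),
               qmul (snd y) (fst x) + qmul (snd x) (qconj (fst y)))"

definition oone :: oct where
  "oone = ((1, 0), (0, 0))"

primrec opow :: "oct \<Rightarrow> nat \<Rightarrow> oct" where
  "opow x 0 = oone"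
| "opow x (Suc k) = omul x (opow x k)"

end

theory Submission
  imports Defs "HOL-Complex_Analysis.Riemann_Mapping"
begin

text \<open>Restricted to a complex slice \<open>\<complex>\<^sub>I = \<real> + \<real>I\<close> and projected onto a complex line
  \<open>\<complex>\<^sub>I v\<close> of the octonions, a slice regular \<open>f\<close> with \<open>|f| \<le> 1\<close> becomes a holomorphic map of the unit
  disc into the closed disc. Choosing \<open>I\<close> and \<open>v\<close> so that \<open>a\<^sub>0\<close> and \<open>a\<^sub>k\<close> both lie on \<open>\<complex>\<^sub>I v\<close>, its
  coefficients of index \<open>0\<close> and \<open>k\<close> have moduli \<open>|a\<^sub>0|\<close> and \<open>|a\<^sub>k|\<close>, so the classical Wiener
  inequality \<open>|a\<^sub>k| \<le> 1 - |a\<^sub>0|\<^sup>2\<close> (Schwarz-Pick, after averaging over the \<open>k\<close>-th roots of unity)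
  carries over. Hence for \<open>|x| = r\<close> both the sum of the \<open>|x\<^sup>k a\<^sub>k|\<close> over \<open>k \<ge> 1\<close> and \<open>|f x - a\<^sub>0|\<close> are
  at most \<open>(1 - |a\<^sub>0|\<^sup>2) \<rho>\<close> with \<open>\<rho> = r / (1 - r)\<close>, and the weighted AM-GM inequality
  \<open>|a\<^sub>0|\<^sup>m \<le> 1 - m/2 (1 - |a\<^sub>0|\<^sup>2)\<close> closes the estimate as soon as \<open>\<rho> + \<lambda> \<rho>\<^sup>q \<le> m/2\<close>.\<close>

section \<open>Octonion arithmetic in coordinates\<close>

definition Oct :: "real \<Rightarrow> real \<Rightarrow> real \<Rightarrow> real \<Rightarrow> real \<Rightarrow> real \<Rightarrow> real \<Rightarrow> real \<Rightarrow> oct" where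
  "Oct a b c d e f g h = ((Complex a b, Complex c d), (Complex e f, Complex g h))"

lemma Oct_cases: obtains a b c d e f g h where "x = Oct a b c d e f g h"
  unfolding Oct_def by (metis complex.exhaust_sel prod.collapse)

lemma Oct_eq_iff:
  "Oct a b c d e f g h = Oct a' b' c' d' e' f' g' h' \<longleftrightarrow>
     a = a' \<and> b = b' \<and> c = c' \<and> d = d' \<and> e = e' \<and> f = f' \<and> g = g' \<and> h = h'"
  unfolding Oct_def by (simp add: complex_eq_iff)

lemma zero_Oct: "0 = Oct 0 0 0 0 0 0 0 0"
  unfolding Oct_def by (simp add: zero_prod_def complex_eq_iff)

lemma oone_Oct: "oone = Oct 1 0 0 0 0 0 0 0"
  unfolding Oct_def oone_def by (simp add: complex_eq_iff)

lemma plus_Oct: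
  "Oct a b c d e f g h + Oct a' b' c' d' e' f' g' h' =
     Oct (a + a') (b + b') (c + c') (d + d') (e + e') (f + f') (g + g') (h + h')"
  unfolding Oct_def by (simp add: complex_eq_iff)

lemma scaleR_Oct:
  "r *\<^sub>R Oct a b c d e f g h = Oct (r * a) (r * b) (r * c) (r * d) (r * e) (r * f) (r * g) (r * h)"
  unfolding Oct_def by (simp add: complex_eq_iff)

lemma inner_Oct:
  "inner (Oct a b c d e f g h) (Oct a' b' c' d' e' f' g' h') =
     a * a' + b * b' + c * c' + d * d' + e * e' + f * f' + g * g' + h * h'"
  unfolding Oct_def by (simp add: inner_complex_def)

lemma norm_Oct_power2:
  "(norm (Oct a b c d e f g h))\<^sup>2 = a\<^sup>2 + b\<^sup>2 + c\<^sup>2 + d\<^sup>2 + e\<^sup>2 + f\<^sup>2 + g\<^sup>2 + h\<^sup>2"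
  unfolding power2_norm_eq_inner inner_Oct by (simp add: power2_eq_square)

lemma omul_Oct: "omul (Oct a b c d e f g h) (Oct a' b' c' d' e' f' g' h') = Oct
    (a * a' - b * b' - (c' * c + d' * d) - (e' * e + f' * f + (g * g' + h * h')))
    (a * b' + b * a' - (c' * d - d' * c) - (e' * f - f' * e + (g * h' - h * g')))
    (c' * a - d' * b + (c * a' + d * b') - (g * e' + h * f' - (g' * e + h' * f)))
    (c' * b + d' * a + (d * a' - c * b') - (h * e' - g * f' - (h' * e - g' * f)))
    (e' * a - f' * b - (c * g' + d * h') + (e * a' + f * b' + (c' * g + d' * h)))
    (e' * b + f' * a - (c * h' - d * g') + (f * a' - e * b' + (c' * h - d' * g)))
    (c * e' - d * f' + (g' * a + h' * b) + (g * a' - h * b' - (c' * e - d' * f)))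
    (c * f' + d * e' + (h' * a - g' * b) + (g * b' + h * a' - (c' * f + d' * e)))"
  unfolding Oct_def omul_def qmul_def qconj_def by (simp add: complex_eq_iff)

definition oconj :: "oct \<Rightarrow> oct" where
  "oconj x = (qconj (fst x), - snd x)"

lemma oconj_Oct: "oconj (Oct a b c d e f g h) = Oct a (-b) (-c) (-d) (-e) (-f) (-g) (-h)"
  unfolding Oct_def oconj_def qconj_def by (simp add: complex_eq_iff)

text \<open>Multiplicativity of the norm is Degen's eight-square identity.\<close>

lemma norm_omul: "norm (omul x y) = norm x * norm y"
proof -
  have "(norm (omul x y))\<^sup>2 = (norm x)\<^sup>2 * (norm y)\<^sup>2"
    by (cases x rule: Oct_cases; cases y rule: Oct_cases)
      (simp only: omul_Oct norm_Oct_power2, simp add: power2_eq_square algebra_simps)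
  then show ?thesis
    by (simp add: power2_eq_imp_eq flip: power_mult_distrib)
qed

lemma omul_oone_left: "omul oone y = y"
  by (cases y rule: Oct_cases) (simp add: oone_Oct omul_Oct)

lemma omul_zero_left: "omul 0 y = 0"
  by (cases y rule: Oct_cases) (simp add: zero_Oct omul_Oct)

lemma omul_add_left: "omul (x + z) y = omul x y + omul z y"
  by (cases x rule: Oct_cases; cases y rule: Oct_cases; cases z rule: Oct_cases)
    (simp add: plus_Oct omul_Oct Oct_eq_iff algebra_simps)

lemma omul_scaleR_left: "omul (r *\<^sub>R x) y = r *\<^sub>R omul x y"
  by (cases x rule: Oct_cases; cases y rule: Oct_cases)
    (simp add: scaleR_Oct omul_Oct Oct_eq_iff algebra_simps)

lemma inner_omul_omul: "inner (omul x u) (omul x w) = (norm x)\<^sup>2 * inner u w"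
  by (cases x rule: Oct_cases; cases u rule: Oct_cases; cases w rule: Oct_cases)
    (simp only: omul_Oct inner_Oct norm_Oct_power2, simp add: power2_eq_square algebra_simps)

lemma omul_omul_oconj: "omul (omul y (oconj x)) x = (norm x)\<^sup>2 *\<^sub>R y"
  by (cases x rule: Oct_cases; cases y rule: Oct_cases)
    (simp only: oconj_Oct omul_Oct norm_Oct_power2 scaleR_Oct Oct_eq_iff,
     simp add: power2_eq_square algebra_simps)

lemma norm_opow: "norm (opow x k) = norm x ^ k"
  by (induction k) (simp_all add: oone_def norm_Pair norm_omul)

section \<open>Complex slices\<close>

definition imag_unit :: "oct \<Rightarrow> bool" where
  "imag_unit I \<longleftrightarrow> inner I oone = 0 \<and> norm I = 1"

lemma imag_unitE:
  assumes "imag_unit I"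
  obtains b c d e f g h
  where "I = Oct 0 b c d e f g h" "b\<^sup>2 + c\<^sup>2 + d\<^sup>2 + e\<^sup>2 + f\<^sup>2 + g\<^sup>2 + h\<^sup>2 = 1"
proof -
  obtain a b c d e f g h where I: "I = Oct a b c d e f g h"
    by (rule Oct_cases)
  have "a = 0"
    using assms unfolding imag_unit_def I oone_Oct inner_Oct by simp
  moreover have "(norm I)\<^sup>2 = 1"
    using assms by (simp add: imag_unit_def)
  ultimately show ?thesis
    using that I by (simp add: norm_Oct_power2)
qed

lemma inner_omul_imag_unit:
  assumes "imag_unit I"
  shows "inner (omul I u) w = - inner u (omul I w)"
proof -
  obtain b c d e f g h where I: "I = Oct 0 b c d e f g h"
    using imag_unitE[OF assms] by metis
  show ?thesis
    unfolding I by (cases u rule: Oct_cases; cases w rule: Oct_cases)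
      (simp only: omul_Oct inner_Oct, simp add: algebra_simps)
qed

definition slice :: "oct \<Rightarrow> complex \<Rightarrow> oct" where
  "slice I w = Re w *\<^sub>R oone + Im w *\<^sub>R I"

lemma omul_slice_left: "omul (slice I w) u = Re w *\<^sub>R u + Im w *\<^sub>R omul I u"
  unfolding slice_def by (simp add: omul_add_left omul_scaleR_left omul_oone_left)

lemma omul_slice:
  assumes "imag_unit I"
  shows "omul (slice I w) (slice I v) = slice I (w * v)"
proof -
  obtain b c d e f g h where I: "I = Oct 0 b c d e f g h"
    and one: "b\<^sup>2 + c\<^sup>2 + d\<^sup>2 + e\<^sup>2 + f\<^sup>2 + g\<^sup>2 + h\<^sup>2 = 1"
    using imag_unitE[OF assms] by metis
  have "Im w * Im v * (b\<^sup>2 + c\<^sup>2 + d\<^sup>2 + e\<^sup>2 + f\<^sup>2 + g\<^sup>2 + h\<^sup>2) = Im w * Im v"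
    using one by simp
  then show ?thesis
    unfolding I slice_def oone_Oct scaleR_Oct plus_Oct omul_Oct Oct_eq_iff
    by (simp add: algebra_simps power2_eq_square)
qed

lemma norm_slice:
  assumes "imag_unit I"
  shows "norm (slice I w) = cmod w"
proof -
  obtain b c d e f g h where I: "I = Oct 0 b c d e f g h"
    and one: "b\<^sup>2 + c\<^sup>2 + d\<^sup>2 + e\<^sup>2 + f\<^sup>2 + g\<^sup>2 + h\<^sup>2 = 1"
    using imag_unitE[OF assms] by metis
  have "(Im w)\<^sup>2 * (b\<^sup>2 + c\<^sup>2 + d\<^sup>2 + e\<^sup>2 + f\<^sup>2 + g\<^sup>2 + h\<^sup>2) = (Im w)\<^sup>2"
    using one by simp
  then have "(norm (slice I w))\<^sup>2 = (cmod w)\<^sup>2"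
    unfolding I slice_def oone_Oct scaleR_Oct plus_Oct norm_Oct_power2 cmod_power2
    by (simp add: algebra_simps power2_eq_square)
  then show ?thesis
    by (simp add: power2_eq_imp_eq)
qed

lemma opow_slice:
  assumes "imag_unit I"
  shows "opow (slice I w) n = slice I (w ^ n)"
  by (induction n) (simp_all add: slice_def omul_slice[OF assms, unfolded slice_def])

lemma ex_slice: "\<exists>I w. imag_unit I \<and> slice I w = z"
proof -
  define t where "t = inner z oone"
  define u where "u = z - t *\<^sub>R oone"
  have oone: "inner oone oone = 1"
    by (simp add: oone_Oct inner_Oct)
  have u_perp: "inner u oone = 0"
    by (simp add: u_def t_def inner_diff_left oone)
  show ?thesis
  proof (cases "u = 0")
    case True
    have "imag_unit (Oct 0 1 0 0 0 0 0 0)"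
      by (simp add: imag_unit_def oone_Oct inner_Oct norm_eq_sqrt_inner)
    moreover have "slice (Oct 0 1 0 0 0 0 0 0) (of_real t) = z"
      using True by (simp add: slice_def u_def)
    ultimately show ?thesis
      by blast
  next
    case False
    then have "imag_unit (u /\<^sub>R norm u)"
      by (simp add: imag_unit_def u_perp)
    moreover have "slice (u /\<^sub>R norm u) (Complex t (norm u)) = z"
      using False by (simp add: slice_def u_def)
    ultimately show ?thesis
      by blast
  qed
qed

text \<open>Coordinates of the orthogonal projection onto the plane spanned by \<open>v\<close> and \<open>I v\<close>, with
  respect to the basis \<open>v / |v|\<close>, \<open>I v / |v|\<close>. Since left multiplication by \<open>I\<close> is a skew
  isometry, this plane is the complex line \<open>\<complex>\<^sub>I v\<close> and the projection is \<open>\<complex>\<^sub>I\<close>-linear.\<close>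

definition slice_proj :: "oct \<Rightarrow> oct \<Rightarrow> oct \<Rightarrow> complex" where
  "slice_proj I v u = Complex (inner u v / norm v) (inner u (omul I v) / norm v)"

lemma slice_proj_add: "slice_proj I v (u + u') = slice_proj I v u + slice_proj I v u'"
  unfolding slice_proj_def by (simp add: complex_eq_iff inner_add_left add_divide_distrib)

lemma slice_proj_scaleR: "slice_proj I v (r *\<^sub>R u) = r *\<^sub>R slice_proj I v u"
  unfolding slice_proj_def by (simp add: complex_eq_iff)

lemma slice_proj_omul_slice:
  assumes "imag_unit I"
  shows "slice_proj I v (omul (slice I w) u) = w * slice_proj I v u"
proof -
  have "norm I = 1"
    using assms by (simp add: imag_unit_def)
  then have "slice_proj I v (omul I u) = \<i> * slice_proj I v u"
    using inner_omul_imag_unit[OF assms, of u v] inner_omul_omul[of I u v]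
    by (simp add: slice_proj_def complex_eq_iff)
  then show ?thesis
    by (simp add: omul_slice_left slice_proj_add slice_proj_scaleR complex_eq_iff)
qed

lemma slice_proj_self:
  assumes "imag_unit I"
  shows "slice_proj I v v = of_real (norm v)"
proof -
  have "inner v (omul I v) = 0"
    using inner_omul_imag_unit[OF assms, of v v] by (simp add: inner_commute)
  then show ?thesis
    by (simp add: slice_proj_def complex_eq_iff dot_square_norm power2_eq_square)
qed

lemma norm_slice_proj_le:
  assumes "imag_unit I"
  shows "norm (slice_proj I v u) \<le> norm u"
proof (cases "v = 0")
  case True
  then show ?thesis
    by (simp add: slice_proj_def complex_norm)
next
  case False
  define e1 where "e1 = v /\<^sub>R norm v"
  define e2 where "e2 = omul I v /\<^sub>R norm v"
  have "norm I = 1"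
    using assms by (simp add: imag_unit_def)
  then have e1: "inner e1 e1 = 1" and e2: "inner e2 e2 = 1" and e12: "inner e1 e2 = 0"
    using False inner_omul_imag_unit[OF assms, of v v]
    by (simp_all add: e1_def e2_def dot_square_norm norm_omul power2_eq_square inner_commute)
  define x where "x = inner u e1"
  define y where "y = inner u e2"
  have proj: "slice_proj I v u = Complex x y"
    by (simp add: x_def y_def e1_def e2_def slice_proj_def divide_inverse mult.commute)
  have "0 \<le> inner (u - (x *\<^sub>R e1 + y *\<^sub>R e2)) (u - (x *\<^sub>R e1 + y *\<^sub>R e2))"
    by simp
  also have "\<dots> = inner u u - (x\<^sup>2 + y\<^sup>2)"
    by (simp add: inner_diff_left inner_diff_right inner_add_left inner_add_right e1 e2 e12
        inner_commute[of e2 e1] inner_commute[of e1 u] inner_commute[of e2 u] x_def y_def power2_eq_square)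
  finally have "(norm (slice_proj I v u))\<^sup>2 \<le> (norm u)\<^sup>2"
    by (simp add: proj cmod_power2 dot_square_norm)
  then show ?thesis
    by (simp add: power2_le_iff_abs_le)
qed

lemma bounded_linear_slice_proj:
  assumes "imag_unit I"
  shows "bounded_linear (slice_proj I v)"
  by (rule bounded_linear_intro[where K = 1])
    (simp_all add: slice_proj_add slice_proj_scaleR norm_slice_proj_le[OF assms])

lemma common_slice_line: "\<exists>I \<alpha> \<beta> v. imag_unit I \<and> p = omul (slice I \<alpha>) v \<and> q = omul (slice I \<beta>) v"
proof (cases "p = 0")
  case True
  obtain I where "imag_unit I"
    using ex_slice by blast
  moreover have "p = omul (slice I 0) q" "q = omul (slice I 1) q"
    using True by (simp_all add: slice_def omul_zero_left omul_oone_left)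
  ultimately show ?thesis
    by blast
next
  case False
  obtain I \<beta> where I: "imag_unit I" and \<beta>: "slice I \<beta> = (1 / (norm p)\<^sup>2) *\<^sub>R omul q (oconj p)"
    using ex_slice by blast
  have "q = omul (slice I \<beta>) p"
    using False by (simp add: \<beta> omul_scaleR_left omul_omul_oconj)
  moreover have "p = omul (slice I 1) p"
    by (simp add: slice_def omul_oone_left)
  ultimately show ?thesis
    using I by blast
qed

lemma slice_proj_power_series:
  assumes conv: "\<And>x. norm x < 1 \<Longrightarrow> summable (\<lambda>n. omul (opow x n) (a n))"
    and I: "imag_unit I" and w: "norm w < 1"
  shows "(\<lambda>n. slice_proj I v (a n) * w ^ n) sums slice_proj I v (\<Sum>n. omul (opow (slice I w) n) (a n))"
proof -
  have "norm (slice I w) < 1"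
    using w by (simp add: norm_slice[OF I])
  then have "(\<lambda>n. slice_proj I v (omul (opow (slice I w) n) (a n)))
      sums slice_proj I v (\<Sum>n. omul (opow (slice I w) n) (a n))"
    by (intro bounded_linear.sums[OF bounded_linear_slice_proj[OF I]] summable_sums conv)
  then show ?thesis
    by (simp add: opow_slice[OF I] slice_proj_omul_slice[OF I] mult.commute)
qed

section \<open>Wiener's inequality\<close>

lemma Moebius_function_has_field_derivative_center:
  assumes "norm b < 1"
  shows "(Moebius_function 0 b has_field_derivative of_real (1 / (1 - (norm b)\<^sup>2))) (at b)"
proof -
  have cnj_b: "cnj b * b = of_real ((norm b)\<^sup>2)"
    by (metis complex_norm_square mult.commute)
  have "(norm b)\<^sup>2 < 1"
    using assms by (simp add: power_less_one_iff)
  then have nz: "1 - cnj b * b \<noteq> 0"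
    unfolding cnj_b by (metis eq_iff_diff_eq_0 less_irrefl of_real_eq_1_iff)
  have "((\<lambda>u. (u - b) / (1 - cnj b * u)) has_field_derivative
      ((1 - 0) * (1 - cnj b * b) - (b - b) * (0 - cnj b * 1)) / ((1 - cnj b * b) * (1 - cnj b * b)))
      (at b)"
    using nz by (intro DERIV_divide derivative_intros DERIV_cmult DERIV_ident)
  moreover have "((1 - 0) * (1 - cnj b * b) - (b - b) * (0 - cnj b * 1)) / ((1 - cnj b * b) * (1 - cnj b * b))
      = 1 / (1 - cnj b * b)"
    using nz by simp
  moreover have "Moebius_function 0 b = (\<lambda>u. (u - b) / (1 - cnj b * u))"
    by (rule ext) (rule Moebius_function_simple)
  ultimately show ?thesis
    by (simp add: cnj_b)
qed

lemma Schwarz_Pick_deriv_at_0: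
  assumes hol: "g holomorphic_on ball 0 1" and lt1: "\<And>z. norm z < 1 \<Longrightarrow> norm (g z) < 1"
    and g': "(g has_field_derivative g') (at 0)"
  shows "norm g' \<le> 1 - (norm (g 0))\<^sup>2"
proof -
  define b where "b = g 0"
  have b: "norm b < 1" and N: "(norm b)\<^sup>2 < 1"
    using lt1[of 0] by (simp_all add: b_def power_less_one_iff)
  define F where "F = Moebius_function 0 b \<circ> g"
  have "F holomorphic_on ball 0 1"
    unfolding F_def using lt1
    by (intro holomorphic_on_compose_gen[OF hol Moebius_function_holomorphic[OF b]]) auto
  moreover have "F 0 = 0"
    by (simp add: F_def b_def Moebius_function_eq_zero)
  moreover have "norm (F z) < 1" if "norm z < 1" for z
    using Moebius_function_norm_lt_1[OF b lt1[OF that]] by (simp add: F_def)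
  ultimately have "norm (deriv F 0) \<le> 1"
    by (rule Schwarz_Lemma'[THEN conjunct1, THEN conjunct2])
  moreover have "(F has_field_derivative of_real (1 / (1 - (norm b)\<^sup>2)) * g') (at 0)"
    using Moebius_function_has_field_derivative_center[OF b] g'
    unfolding F_def b_def by (rule DERIV_chain)
  ultimately have "norm (of_real (1 / (1 - (norm b)\<^sup>2)) * g') \<le> 1"
    by (metis DERIV_imp_deriv)
  moreover have "0 < 1 / (1 - (norm b)\<^sup>2)"
    using N by simp
  ultimately have "1 / (1 - (norm b)\<^sup>2) * norm g' \<le> 1"
    by (simp only: norm_mult norm_of_real abs_of_pos)
  then show ?thesis
    using N by (simp add: b_def field_simps)
qed

text \<open>The power series is only bounded by \<open>1\<close>; scaling it by \<open>s < 1\<close> moves its values into the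
  open disc, where Schwarz-Pick applies.\<close>

lemma Schwarz_Pick_power_series_scaled:
  fixes c :: "nat \<Rightarrow> complex"
  assumes sm: "\<And>w. norm w < 1 \<Longrightarrow> summable (\<lambda>n. c n * w ^ n)"
    and bd: "\<And>w. norm w < 1 \<Longrightarrow> norm (\<Sum>n. c n * w ^ n) \<le> 1"
    and s: "0 < s" "s < 1"
  shows "s * norm (c 1) \<le> 1 - s\<^sup>2 * (norm (c 0))\<^sup>2"
proof -
  define H where "H = (\<lambda>z. of_real s * (\<Sum>n. c n * z ^ n))"
  have H_deriv: "(H has_field_derivative of_real s * (\<Sum>n. diffs c n * z ^ n)) (at z)"
    if "norm z < 1" for z
    unfolding H_def by (intro DERIV_cmult termdiffs_strong'[OF sm that])
  have "H holomorphic_on ball 0 1"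
    unfolding holomorphic_on_open[OF open_ball] using H_deriv by (metis mem_ball_0)
  moreover have "norm (H z) < 1" if "norm z < 1" for z
  proof -
    have "norm (H z) \<le> s"
      using bd[OF that] s by (simp add: H_def norm_mult mult_left_le)
    then show ?thesis
      using s by simp
  qed
  moreover have "(H has_field_derivative of_real s * c 1) (at 0)"
    using H_deriv[of 0] by (simp add: diffs_def)
  ultimately have "norm (of_real s * c 1) \<le> 1 - (norm (H 0))\<^sup>2"
    by (rule Schwarz_Pick_deriv_at_0)
  then show ?thesis
    using s by (simp add: H_def norm_mult power_mult_distrib)
qed

lemma Schwarz_Pick_power_series:
  fixes c :: "nat \<Rightarrow> complex"
  assumes "\<And>w. norm w < 1 \<Longrightarrow> summable (\<lambda>n. c n * w ^ n)"
    and "\<And>w. norm w < 1 \<Longrightarrow> norm (\<Sum>n. c n * w ^ n) \<le> 1"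
  shows "norm (c 1) \<le> 1 - (norm (c 0))\<^sup>2"
proof -
  have "eventually (\<lambda>s. s \<in> {0<..<1}) (at_left (1::real))"
    by (rule eventually_at_left_real) simp
  then have le: "eventually (\<lambda>s. s * norm (c 1) \<le> 1 - s\<^sup>2 * (norm (c 0))\<^sup>2) (at_left 1)"
    by eventually_elim (intro Schwarz_Pick_power_series_scaled[OF assms]; simp)
  have lhs: "((\<lambda>s. s * norm (c 1)) \<longlongrightarrow> 1 * norm (c 1)) (at_left 1)"
    and rhs: "((\<lambda>s. 1 - s\<^sup>2 * (norm (c 0))\<^sup>2) \<longlongrightarrow> 1 - 1\<^sup>2 * (norm (c 0))\<^sup>2) (at_left 1)"
    by (intro tendsto_intros)+
  from tendsto_le[OF trivial_limit_at_left_real rhs lhs le] show ?thesis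
    by simp
qed

lemma power_series_multisection:
  fixes c :: "nat \<Rightarrow> complex"
  assumes sm: "\<And>w. norm w < 1 \<Longrightarrow> summable (\<lambda>n. c n * w ^ n)"
    and k: "k \<ge> 1" and w: "norm w < 1"
  defines "\<rho> \<equiv> exp (2 * of_real pi * \<i> / of_nat k)"
  shows "(\<lambda>m. c (m * k) * (w ^ k) ^ m) sums (1 / of_nat k * (\<Sum>j<k. \<Sum>n. c n * (\<rho> ^ j * w) ^ n))"
proof -
  have \<rho>_power: "\<rho> ^ n = exp (2 * of_real pi * \<i> * of_nat n / of_nat k)" for n
    unfolding \<rho>_def by (simp add: mult_ac flip: exp_of_nat_mult)
  have norm_\<rho>: "norm \<rho> = 1"
    unfolding \<rho>_def by simp
  have roots_sum: "(\<Sum>j<k. (\<rho> ^ n) ^ j) = (if k dvd n then of_nat k else 0)" for n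
  proof (cases "k dvd n")
    case True
    then have "\<rho> ^ n = 1"
      using \<rho>_power[of n] complex_root_unity_eq_1[OF k, of n] by simp
    then show ?thesis
      using True by simp
  next
    case False
    have "\<rho> ^ k = 1"
      using \<rho>_power[of k] k by simp
    then have "(\<rho> ^ n) ^ k = 1"
      by (metis power_mult mult.commute power_one)
    moreover have "\<rho> ^ n \<noteq> 1"
      using False \<rho>_power[of n] complex_root_unity_eq_1[OF k, of n] by simp
    ultimately show ?thesis
      using False by (simp add: sum_gp_strict)
  qed
  have "(\<lambda>n. \<Sum>j<k. c n * (\<rho> ^ j * w) ^ n) sums (\<Sum>j<k. \<Sum>n. c n * (\<rho> ^ j * w) ^ n)"
    using w by (intro sums_sum summable_sums sm) (simp add: norm_mult norm_power norm_\<rho>)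
  then have "(\<lambda>n. 1 / of_nat k * (\<Sum>j<k. c n * (\<rho> ^ j * w) ^ n))
      sums (1 / of_nat k * (\<Sum>j<k. \<Sum>n. c n * (\<rho> ^ j * w) ^ n))"
    by (rule sums_mult)
  moreover have "1 / of_nat k * (\<Sum>j<k. c n * (\<rho> ^ j * w) ^ n) = (if k dvd n then c n * w ^ n else 0)"
    for n
  proof -
    have "(\<Sum>j<k. c n * (\<rho> ^ j * w) ^ n) = c n * w ^ n * (\<Sum>j<k. (\<rho> ^ n) ^ j)"
      by (simp add: sum_distrib_left power_mult_distrib mult_ac flip: power_mult)
    then show ?thesis
      using roots_sum[of n] k by simp
  qed
  ultimately have "(\<lambda>n. if k dvd n then c n * w ^ n else 0)
      sums (1 / of_nat k * (\<Sum>j<k. \<Sum>n. c n * (\<rho> ^ j * w) ^ n))"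
    by simp
  moreover have "strict_mono (\<lambda>m. m * k)"
    using k by (auto simp: strict_mono_def)
  ultimately have "(\<lambda>m. if k dvd m * k then c (m * k) * w ^ (m * k) else 0)
      sums (1 / of_nat k * (\<Sum>j<k. \<Sum>n. c n * (\<rho> ^ j * w) ^ n))"
    by (subst sums_mono_reindex[where f = "\<lambda>n. if k dvd n then c n * w ^ n else 0"])
      (auto simp: dvd_def mult.commute)
  then show ?thesis
    by (simp add: power_mult mult.commute[of _ k])
qed

lemma ex_nth_root_in_ball:
  fixes z :: complex
  assumes k: "k \<ge> 1" and z: "norm z < 1"
  shows "\<exists>w. w ^ k = z \<and> norm w < 1"
proof (cases "z = 0")
  case True
  then show ?thesis
    using k by (intro exI[of _ 0]) simp
next
  case False
  define w where "w = exp (Ln z / of_nat k)"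
  have "w ^ k = z"
    using k False by (simp add: w_def flip: exp_of_nat_mult)
  moreover have "norm w ^ k < 1"
    using z by (simp flip: norm_power add: \<open>w ^ k = z\<close>)
  ultimately show ?thesis
    by (auto simp: power_less_one_iff)
qed

lemma Wiener_inequality:
  fixes c :: "nat \<Rightarrow> complex"
  assumes sm: "\<And>w. norm w < 1 \<Longrightarrow> summable (\<lambda>n. c n * w ^ n)"
    and bd: "\<And>w. norm w < 1 \<Longrightarrow> norm (\<Sum>n. c n * w ^ n) \<le> 1"
    and k: "k \<ge> 1"
  shows "norm (c k) \<le> 1 - (norm (c 0))\<^sup>2"
proof -
  define \<rho> where "\<rho> = exp (2 * of_real pi * \<i> / of_nat k)"
  have norm_\<rho>: "norm \<rho> = 1"
    unfolding \<rho>_def by simp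
  have "summable (\<lambda>m. c (m * k) * z ^ m) \<and> norm (\<Sum>m. c (m * k) * z ^ m) \<le> 1"
    if z: "norm z < 1" for z
  proof -
    obtain w where w: "w ^ k = z" "norm w < 1"
      using ex_nth_root_in_ball[OF k z] by blast
    have sums: "(\<lambda>m. c (m * k) * z ^ m) sums (1 / of_nat k * (\<Sum>j<k. \<Sum>n. c n * (\<rho> ^ j * w) ^ n))"
      using power_series_multisection[OF sm k w(2)] w(1) unfolding \<rho>_def by simp
    have "norm (1 / of_nat k * (\<Sum>j<k. \<Sum>n. c n * (\<rho> ^ j * w) ^ n))
        \<le> 1 / of_nat k * (\<Sum>j<k. norm (\<Sum>n. c n * (\<rho> ^ j * w) ^ n))"
      by (simp add: norm_mult norm_divide norm_sum divide_right_mono)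
    also have "\<dots> \<le> 1 / of_nat k * (\<Sum>j<k. 1)"
      using w(2) by (intro mult_left_mono sum_mono bd) (auto simp: norm_mult norm_power norm_\<rho>)
    also have "\<dots> = 1"
      using k by simp
    finally show ?thesis
      using sums by (simp add: sums_summable sums_unique[symmetric])
  qed
  then have "norm (c (1 * k)) \<le> 1 - (norm (c (0 * k)))\<^sup>2"
    by (intro Schwarz_Pick_power_series[of "\<lambda>m. c (m * k)"]) auto
  then show ?thesis
    by simp
qed

lemma oct_Wiener_inequality:
  fixes a :: "nat \<Rightarrow> oct"
  assumes conv: "\<And>x. norm x < 1 \<Longrightarrow> summable (\<lambda>n. omul (opow x n) (a n))"
    and bnd: "\<And>x. norm x < 1 \<Longrightarrow> norm (\<Sum>n. omul (opow x n) (a n)) \<le> 1"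
    and k: "k \<ge> 1"
  shows "norm (a k) \<le> 1 - (norm (a 0))\<^sup>2"
proof -
  obtain I \<alpha> \<beta> v where I: "imag_unit I"
    and a0: "a 0 = omul (slice I \<alpha>) v" and ak: "a k = omul (slice I \<beta>) v"
    using common_slice_line by blast
  define c where "c = (\<lambda>n. slice_proj I v (a n))"
  have sums: "(\<lambda>n. c n * w ^ n) sums slice_proj I v (\<Sum>n. omul (opow (slice I w) n) (a n))"
    if "norm w < 1" for w
    unfolding c_def by (rule slice_proj_power_series[OF conv I that])
  have "norm (c k) \<le> 1 - (norm (c 0))\<^sup>2"
  proof (rule Wiener_inequality[OF _ _ k])
    fix w :: complex
    assume w: "norm w < 1"
    show "summable (\<lambda>n. c n * w ^ n)"
      using sums[OF w] by (rule sums_summable)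
    have "norm (slice I w) < 1"
      using w by (simp add: norm_slice[OF I])
    then have "norm (slice_proj I v (\<Sum>n. omul (opow (slice I w) n) (a n))) \<le> 1"
      using norm_slice_proj_le[OF I] bnd order_trans by blast
    then show "norm (\<Sum>n. c n * w ^ n) \<le> 1"
      using sums_unique[OF sums[OF w]] by simp
  qed
  moreover have "norm (c 0) = norm (a 0)" and "norm (c k) = norm (a k)"
    by (simp_all add: c_def a0 ak slice_proj_omul_slice[OF I] slice_proj_self[OF I]
        norm_omul norm_slice[OF I] norm_mult)
  ultimately show ?thesis
    by simp
qed

section \<open>The Bohr-type inequality\<close>

lemma oct_series_at_zero: "(\<Sum>n. omul (opow 0 n) (a n)) = a 0"
proof -
  have "omul (opow 0 n) (a n) = (if n = 0 then a 0 else 0)" for n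
    by (cases n) (simp_all add: omul_oone_left omul_zero_left)
  then have "(\<Sum>n. omul (opow 0 n) (a n)) = (\<Sum>n. if n = 0 then a 0 else 0)"
    by (simp only:)
  also have "\<dots> = a 0"
    using sums_single[of 0 "\<lambda>_. a 0"] by (simp add: sums_iff)
  finally show ?thesis .
qed

lemma powr_le_one_minus_square_defect:
  fixes A m :: real
  assumes A: "0 \<le> A" "A \<le> 1" and m: "0 < m" "m \<le> 2"
  shows "A powr m \<le> 1 - m / 2 * (1 - A\<^sup>2)"
proof (cases "A = 0")
  case True
  then show ?thesis
    using m by simp
next
  case False
  have "(A\<^sup>2) powr (m / 2) * 1 powr (1 - m / 2) \<le> m / 2 * A\<^sup>2 + (1 - m / 2) * 1"
    using m A False by (intro Youngs_inequality_0) auto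
  moreover have "A powr m = (A powr 2) powr (m / 2)"
    by (simp add: powr_powr)
  then have "(A\<^sup>2) powr (m / 2) = A powr m"
    using A by simp
  ultimately show ?thesis
    by (simp add: algebra_simps)
qed

lemma oct_series_tail_bounds:
  fixes a :: "nat \<Rightarrow> oct"
  assumes conv: "\<And>x. norm x < 1 \<Longrightarrow> summable (\<lambda>n. omul (opow x n) (a n))"
    and bnd: "\<And>x. norm x < 1 \<Longrightarrow> norm (\<Sum>n. omul (opow x n) (a n)) \<le> 1"
    and x: "norm x < 1"
  shows "summable (\<lambda>n. norm (omul (opow x n) (a n)))"
    and "(\<Sum>n. norm (omul (opow x (Suc n)) (a (Suc n))))
           \<le> (1 - (norm (a 0))\<^sup>2) * (norm x / (1 - norm x))"
    and "norm ((\<Sum>n. omul (opow x n) (a n)) - a 0) \<le> (1 - (norm (a 0))\<^sup>2) * (norm x / (1 - norm x))"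
proof -
  define r where "r = norm x"
  define B where "B = 1 - (norm (a 0))\<^sup>2"
  have r: "0 \<le> r" "r < 1"
    using x by (auto simp: r_def)
  have "norm (a 0) \<le> 1"
    using bnd[of 0] by (simp add: oct_series_at_zero)
  then have B: "0 \<le> B"
    by (simp add: B_def power_le_one)
  have "(\<lambda>n. B * r * r ^ n) sums (B * r * (1 / (1 - r)))"
    using r by (intro sums_mult geometric_sums) simp
  then have geom: "(\<lambda>n. B * r * r ^ n) sums (B * (r / (1 - r)))"
    by simp
  have tail_le: "norm (omul (opow x (Suc n)) (a (Suc n))) \<le> B * r * r ^ n" for n
  proof -
    have "norm (a (Suc n)) \<le> B"
      using oct_Wiener_inequality[OF conv bnd, of "Suc n"] by (simp add: B_def)
    then have "r ^ Suc n * norm (a (Suc n)) \<le> r ^ Suc n * B"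
      using r by (intro mult_left_mono) auto
    then show ?thesis
      by (simp add: norm_omul norm_opow r_def mult_ac)
  qed
  have tail_summable: "summable (\<lambda>n. norm (omul (opow x (Suc n)) (a (Suc n))))"
    using tail_le by (intro summable_comparison_test[OF _ sums_summable[OF geom]]) auto
  then show "summable (\<lambda>n. norm (omul (opow x n) (a n)))"
    using summable_Suc_iff[of "\<lambda>n. norm (omul (opow x n) (a n))"] by (simp del: opow.simps)
  have "(\<Sum>n. norm (omul (opow x (Suc n)) (a (Suc n)))) \<le> (\<Sum>n. B * r * r ^ n)"
    using tail_le tail_summable sums_summable[OF geom] by (rule suminf_le)
  also have "\<dots> = B * (r / (1 - r))"
    using geom by (rule sums_unique[symmetric])
  finally have tail: "(\<Sum>n. norm (omul (opow x (Suc n)) (a (Suc n)))) \<le> B * (r / (1 - r))" .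
  then show "(\<Sum>n. norm (omul (opow x (Suc n)) (a (Suc n))))
      \<le> (1 - (norm (a 0))\<^sup>2) * (norm x / (1 - norm x))"
    by (simp add: B_def r_def)
  have "(\<Sum>n. omul (opow x n) (a n)) - a 0 = (\<Sum>n. omul (opow x (Suc n)) (a (Suc n)))"
    using suminf_split_head[OF conv[OF x]] by (simp add: omul_oone_left)
  then have "norm ((\<Sum>n. omul (opow x n) (a n)) - a 0)
      \<le> (\<Sum>n. norm (omul (opow x (Suc n)) (a (Suc n))))"
    using tail_summable by (simp add: summable_norm)
  with tail show "norm ((\<Sum>n. omul (opow x n) (a n)) - a 0)
      \<le> (1 - (norm (a 0))\<^sup>2) * (norm x / (1 - norm x))"
    by (simp add: B_def r_def)
qed

lemma powr_le_mult_powr: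
  fixes B D \<rho> q :: real
  assumes "0 \<le> D" "D \<le> B * \<rho>" "0 \<le> B" "B \<le> 1" "0 \<le> \<rho>" "1 \<le> q"
  shows "D powr q \<le> B * \<rho> powr q"
proof -
  have "B powr q \<le> B powr 1"
    using assms by (intro powr_mono') auto
  then have "B powr q \<le> B"
    using assms by simp
  have "D powr q \<le> (B * \<rho>) powr q"
    using assms by (intro powr_mono2) auto
  also have "\<dots> = B powr q * \<rho> powr q"
    using assms by (simp add: powr_mult)
  also have "\<dots> \<le> B * \<rho> powr q"
    using \<open>B powr q \<le> B\<close> by (rule mult_right_mono) simp
  finally show ?thesis .
qed

lemma oct_Bohr_inequality:
  fixes m lam q R :: real and a :: "nat \<Rightarrow> oct" and x :: oct
  assumes m: "0 < m" "m \<le> 2" and lam: "lam \<ge> 0" and q: "q \<ge> 1"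
    and conv: "\<And>x. norm x < 1 \<Longrightarrow> summable (\<lambda>n. omul (opow x n) (a n))"
    and bnd: "\<And>x. norm x < 1 \<Longrightarrow> norm (\<Sum>n. omul (opow x n) (a n)) \<le> 1"
    and R: "R < 1" "R / (1 - R) + lam * (R / (1 - R)) powr q \<le> m / 2"
    and x: "norm x \<le> R"
  shows "norm (a 0) powr m + (\<Sum>n. norm (omul (opow x (Suc n)) (a (Suc n))))
           + lam * norm ((\<Sum>n. omul (opow x n) (a n)) - a 0) powr q \<le> 1"
proof -
  define A where "A = norm (a 0)"
  define B where "B = 1 - A\<^sup>2"
  define \<rho> where "\<rho> = R / (1 - R)"
  define T where "T = (\<Sum>n. norm (omul (opow x (Suc n)) (a (Suc n))))"
  define D where "D = norm ((\<Sum>n. omul (opow x n) (a n)) - a 0)"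
  have x1: "norm x < 1"
    using x R by simp
  have A: "0 \<le> A" "A \<le> 1"
    using bnd[of 0] by (simp_all add: A_def oct_series_at_zero)
  then have B: "0 \<le> B" "B \<le> 1"
    by (simp_all add: B_def power_le_one)
  have "0 \<le> R"
    using x norm_ge_zero order_trans by blast
  then have \<rho>: "0 \<le> \<rho>" "norm x / (1 - norm x) \<le> \<rho>"
    using x R unfolding \<rho>_def by (auto intro!: frac_le)
  have "B * (norm x / (1 - norm x)) \<le> B * \<rho>"
    using \<rho>(2) B(1) by (rule mult_left_mono)
  then have T: "T \<le> B * \<rho>" and D: "D \<le> B * \<rho>"
    using oct_series_tail_bounds(2,3)[OF conv bnd x1] unfolding T_def D_def B_def A_def by linarith+
  have "lam * D powr q \<le> lam * (B * \<rho> powr q)"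
    using powr_le_mult_powr[OF _ D B \<rho>(1) q] lam by (intro mult_left_mono) (auto simp: D_def)
  then have "A powr m + T + lam * D powr q \<le> A powr m + B * (\<rho> + lam * \<rho> powr q)"
    using T by (simp add: algebra_simps)
  also have "\<dots> \<le> A powr m + B * (m / 2)"
    using mult_left_mono[OF R(2) B(1)] unfolding \<rho>_def by linarith
  also have "\<dots> \<le> 1"
    using powr_le_one_minus_square_defect[OF A m] by (simp add: B_def algebra_simps)
  finally show ?thesis
    unfolding A_def T_def D_def .
qed

lemma Bohr_radius_equation_unique_root:
  fixes m lam q :: real
  assumes m: "0 < m" and lam: "lam \<ge> 0" and q: "q > 0"
  shows "\<exists>!R. 0 < R \<and> R < 1 \<and> - m / 2 + R / (1 - R) + lam * (R / (1 - R)) powr q = 0"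
proof -
  define h where "h = (\<lambda>R::real. - m / 2 + R / (1 - R) + lam * (R / (1 - R)) powr q)"
  have h_less: "h R < h R'" if "0 \<le> R" "R < R'" "R' < 1" for R R'
  proof -
    have "R / (1 - R) < R' / (1 - R')"
      using that by (intro frac_less) auto
    moreover from this have "lam * (R / (1 - R)) powr q \<le> lam * (R' / (1 - R')) powr q"
      using that q lam by (intro mult_left_mono powr_mono2) auto
    ultimately show ?thesis
      unfolding h_def by linarith
  qed
  define R1 where "R1 = m / (m + 2)"
  have R1: "0 < R1" "R1 < 1" "R1 / (1 - R1) = m / 2"
    using m by (auto simp: R1_def field_simps)
  have "continuous_on {0..R1} (\<lambda>R. R / (1 - R))"
    using R1 by (intro continuous_intros) auto
  then have "continuous_on {0..R1} h"
    unfolding h_def using q R1 by (intro continuous_intros continuous_on_powr') auto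
  moreover have "h 0 < 0" and "0 \<le> h R1"
    using m lam R1 by (simp_all add: h_def)
  ultimately obtain R where R: "0 \<le> R" "R \<le> R1" "h R = 0"
    using IVT'[of h 0 0 R1] R1 by auto
  have "0 < R" "R < 1"
    using R R1 \<open>h 0 < 0\<close> by (auto simp: less_le)
  moreover have "R' = R" if "0 < R'" "R' < 1" "h R' = 0" for R'
    using h_less[of R R'] h_less[of R' R] that R \<open>R < 1\<close> by (cases R R' rule: linorder_cases) auto
  ultimately show ?thesis
    using R(3) unfolding h_def by blast
qed

lemma oct_Bohr_inequality_2_minus_sqrt3:
  fixes a :: "nat \<Rightarrow> oct" and x :: oct
  assumes conv: "\<And>x. norm x < 1 \<Longrightarrow> summable (\<lambda>n. omul (opow x n) (a n))"
    and bnd: "\<And>x. norm x < 1 \<Longrightarrow> norm (\<Sum>n. omul (opow x n) (a n)) \<le> 1"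
    and x: "norm x \<le> 2 - sqrt 3"
  shows "(\<Sum>n. norm (omul (opow x n) (a n))) + (norm ((\<Sum>n. omul (opow x n) (a n)) - a 0))\<^sup>2 \<le> 1"
proof -
  define R where "R = 2 - sqrt (3::real)"
  have sqrt3: "1 < sqrt (3::real)" "sqrt (3::real) < 2" "sqrt 3 * sqrt (3::real) = 3"
    by (simp_all add: real_less_rsqrt real_less_lsqrt)
  then have R: "R < 1" "R / (1 - R) = (sqrt 3 - 1) / 2"
    by (auto simp: R_def field_simps)
  have x1: "norm x < 1"
    using x R(1) unfolding R_def by linarith
  have "((sqrt 3 - 1) / 2)\<^sup>2 = 1 / 2 - (sqrt 3 - 1) / (2::real)"
    by (simp add: power2_eq_square field_simps)
  then have R_root: "R / (1 - R) + 1 * (R / (1 - R)) powr 2 \<le> 1 / 2"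
    using sqrt3(1) unfolding R(2) by simp
  have "norm (a 0) powr 1 + (\<Sum>n. norm (omul (opow x (Suc n)) (a (Suc n))))
      + 1 * norm ((\<Sum>n. omul (opow x n) (a n)) - a 0) powr 2 \<le> 1"
    by (rule oct_Bohr_inequality[where m = 1 and lam = 1 and q = 2 and R = R])
      (use conv bnd R_root R x in \<open>auto simp: R_def\<close>)
  moreover have "(\<Sum>n. norm (omul (opow x n) (a n)))
      = norm (a 0) + (\<Sum>n. norm (omul (opow x (Suc n)) (a (Suc n))))"
    using suminf_split_head[OF oct_series_tail_bounds(1)[OF conv bnd x1]] by (simp add: omul_oone_left)
  ultimately show ?thesis
    by simp
qed

theorem theorem1p2:
  fixes m lam q :: real and a :: "nat \<Rightarrow> oct"
  assumes m: "0 < m" "m \<le> 2" and lam: "lam \<ge> 0" and q: "q \<ge> 1"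
    and conv: "\<And>x::oct. norm x < 1 \<Longrightarrow> summable (\<lambda>k. omul (opow x k) (a k))"
    and bnd: "\<And>x::oct. norm x < 1 \<Longrightarrow> norm (\<Sum>k. omul (opow x k) (a k)) \<le> 1"
  shows "(\<exists>!R. 0 < R \<and> R < 1 \<and> - m / 2 + R / (1 - R) + lam * (R / (1 - R)) powr q = 0)
       \<and> (\<forall>R. 0 < R \<and> R < 1 \<and> - m / 2 + R / (1 - R) + lam * (R / (1 - R)) powr q = 0 \<longrightarrow>
            (\<forall>x::oct. norm x < 1 \<and> norm x \<le> R \<longrightarrow>
               summable (\<lambda>k. norm (omul (opow x k) (a k))) \<and>
               norm (a 0) powr m + (\<Sum>k. norm (omul (opow x (Suc k)) (a (Suc k))))
                 + lam * norm ((\<Sum>k. omul (opow x k) (a k)) - a 0) powr q \<le> 1))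
       \<and> (\<forall>x::oct. norm x < 1 \<and> norm x \<le> 2 - sqrt 3 \<longrightarrow>
            summable (\<lambda>k. norm (omul (opow x k) (a k))) \<and>
            (\<Sum>k. norm (omul (opow x k) (a k)))
              + (norm ((\<Sum>k. omul (opow x k) (a k)) - a 0))\<^sup>2 \<le> 1)"
proof -
  have Bohr: "summable (\<lambda>k. norm (omul (opow x k) (a k))) \<and>
      norm (a 0) powr m + (\<Sum>k. norm (omul (opow x (Suc k)) (a (Suc k))))
        + lam * norm ((\<Sum>k. omul (opow x k) (a k)) - a 0) powr q \<le> 1"
    if "R < 1" "- m / 2 + R / (1 - R) + lam * (R / (1 - R)) powr q = 0" "norm x < 1" "norm x \<le> R"
    for R and x :: oct
  proof
    show "summable (\<lambda>k. norm (omul (opow x k) (a k)))"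
      by (rule oct_series_tail_bounds(1)[OF conv bnd that(3)])
    have "R / (1 - R) + lam * (R / (1 - R)) powr q \<le> m / 2"
      using that(2) by linarith
    then show "norm (a 0) powr m + (\<Sum>k. norm (omul (opow x (Suc k)) (a (Suc k))))
        + lam * norm ((\<Sum>k. omul (opow x k) (a k)) - a 0) powr q \<le> 1"
      using oct_Bohr_inequality[OF m lam q conv bnd that(1) _ that(4)] by blast
  qed
  show ?thesis
    using Bohr_radius_equation_unique_root[OF m(1) lam] q Bohr
      oct_series_tail_bounds(1)[OF conv bnd] oct_Bohr_inequality_2_minus_sqrt3[OF conv bnd]
    by auto
qed

end
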